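(* Let $G=(V,E)$ be a finite simple graph of order $n$ and let $T=n-1$. If $(x,y,z)$ is an optimal solution of the integer program with the constraints of the Time Step Model $\mathrm{TSM}(G,T)$ and objective "minimize $\sum_{v\in V}x^0_v+\sum_{t\in[T]}z^t$", then $C=\{v\in V\colon x^0_v=1\}$ is a zero forcing set of $G$ with $\mathrm{th}(G)=\mathrm{th}(G,C)=\sum_{v\in V}x^0_v+\sum_{t\in[T]}z^t$.
   Context: Zero forcing: under the standard color change rule a filled vertex $u$ can force a non-filled vertex $v$ if $v$ is the only non-filled neighbor of $u$; $C\subseteq V$ is a zero forcing set if, starting with $C$ filled and repeatedly forcing, all of $V$ becomes filled. The propagation time $\mathrm{pt}(G,C)$ is the smallest $t^*$ such that, starting from $C^{[0]}=C$ and setting $C^{[t]}=C^{[t-1]}\cup\{v\notin C^{[t-1]}\colon$ some $u\in C^{[t-1]}$ has $v$ as its only neighbor outside $C^{[t-1]}\}$, one has $C^{[t^*]}=V$ ($\infty$ if $C$ is not a zero forcing set). $\mathrm{th}(G,C)=|C|+\mathrm{pt}(G,C)$ and $\mathrm{th}(G)=\min_{C\subseteq V}\mathrm{th}(G,C)$. $N(u)$ is the neighborhood of $u$ and $d(u)=|N(u)|$. Time Step Model constraints: $A$ is the set of arcs containing $(u,v)$ and $(v,u)$ for each edge $\{u,v\}$, $[T]=\{1,\dots,T\}$. Binary variables $x^t_v$ ($v\in V$, $t\in\{0,\dots,T\}$), $y^t_a$ ($a\in A$, $t\in[T]$), $z^t$ ($t\in[T]$), with constraints: (1) $x^0_v+\sum_{t\in[T]}\sum_{a=(u,v)\in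 A}y^t_a=1$ for all $v$; (2) $y^t_a\leq x^{t-1}_u$ for all $a=(u,v)\in A$, $t\in[T]$; (3) $y^t_a\leq x^{t-1}_w$ for all $a=(u,v)\in A$, $w\in N(u)\setminus\{v\}$, $t\in[T]$; (4) $x^t_v=x^{t-1}_v+\sum_{a=(u,v)\in A}y^t_a$ for all $v$, $t\in[T]$; (5) $x^{t-1}_u-x^{t-1}_v+\sum_{w\in N(u)\setminus\{v\}}x^{t-1}_w\leq\sum_{a=(w,v)\in A}y^t_a+d(u)-1$ for all $(u,v)\in A$, $t\in[T]$; (6) $\frac1n\sum_{v\in V}(x^t_v-x^{t-1}_v)-z^t\leq0$ for all $t\in[T]$; (7) $z^t-\sum_{v\in V}(x^t_v-x^{t-1}_v)\leq 0$ for all $t\in[T]$. *)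

theory Defs
  imports Main "HOL-Library.Extended_Nat" Complex_Main
begin

definition simple_graph :: "'a set \<Rightarrow> ('a \<Rightarrow> 'a \<Rightarrow> bool) \<Rightarrow> bool" where
  "simple_graph V E \<longleftrightarrow> finite V \<and> (\<forall>u v. E u v \<longrightarrow> u \<in> V \<and> v \<in> V)
     \<and> (\<forall>u v. E u v \<longrightarrow> E v u) \<and> (\<forall>u. \<not> E u u)"

definition nbhd :: "'a set \<Rightarrow> ('a \<Rightarrow> 'a \<Rightarrow> bool) \<Rightarrow> 'a \<Rightarrow> 'a set" where
  "nbhd V E u = {w \<in> V. E u w}"

definition deg :: "'a set \<Rightarrow> ('a \<Rightarrow> 'a \<Rightarrow> bool) \<Rightarrow> 'a \<Rightarrow> nat" where
  "deg V E u = card (nbhd V E u)"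

definition arcs :: "'a set \<Rightarrow> ('a \<Rightarrow> 'a \<Rightarrow> bool) \<Rightarrow> ('a \<times> 'a) set" where
  "arcs V E = {(u, v). u \<in> V \<and> v \<in> V \<and> E u v}"

inductive_set zf_closure :: "'a set \<Rightarrow> ('a \<Rightarrow> 'a \<Rightarrow> bool) \<Rightarrow> 'a set \<Rightarrow> 'a set"
  for V E C where
  init: "v \<in> C \<Longrightarrow> v \<in> zf_closure V E C"
| force: "u \<in> zf_closure V E C \<Longrightarrow> v \<in> nbhd V E u \<Longrightarrow>
          (\<forall>w \<in> nbhd V E u - {v}. w \<in> zf_closure V E C) \<Longrightarrow> v \<in> zf_closure V E C"

definition zero_forcing_set :: "'a set \<Rightarrow> ('a \<Rightarrow> 'a \<Rightarrow> bool) \<Rightarrow> 'a set \<Rightarrow> bool" where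
  "zero_forcing_set V E C \<longleftrightarrow> C \<subseteq> V \<and> V \<subseteq> zf_closure V E C"

definition prop_step :: "'a set \<Rightarrow> ('a \<Rightarrow> 'a \<Rightarrow> bool) \<Rightarrow> 'a set \<Rightarrow> 'a set" where
  "prop_step V E S = S \<union> {v. v \<notin> S \<and> (\<exists>u \<in> S. nbhd V E u - S = {v})}"

definition prop_time :: "'a set \<Rightarrow> ('a \<Rightarrow> 'a \<Rightarrow> bool) \<Rightarrow> 'a set \<Rightarrow> enat" where
  "prop_time V E C = (if \<exists>t. (prop_step V E ^^ t) C = V
      then enat (LEAST t. (prop_step V E ^^ t) C = V) else \<infinity>)"

definition throttle_set :: "'a set \<Rightarrow> ('a \<Rightarrow> 'a \<Rightarrow> bool) \<Rightarrow> 'a set \<Rightarrow> enat" where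
  "throttle_set V E C = enat (card C) + prop_time V E C"

definition throttle :: "'a set \<Rightarrow> ('a \<Rightarrow> 'a \<Rightarrow> bool) \<Rightarrow> enat" where
  "throttle V E = (INF C \<in> Pow V. throttle_set V E C)"

definition in_arcs :: "'a set \<Rightarrow> ('a \<Rightarrow> 'a \<Rightarrow> bool) \<Rightarrow> 'a \<Rightarrow> ('a \<times> 'a) set" where
  "in_arcs V E v = {a \<in> arcs V E. snd a = v}"

definition tsm_feasible :: "'a set \<Rightarrow> ('a \<Rightarrow> 'a \<Rightarrow> bool) \<Rightarrow> nat \<Rightarrow>
    ('a \<Rightarrow> nat \<Rightarrow> real) \<Rightarrow> ('a \<times> 'a \<Rightarrow> nat \<Rightarrow> real) \<Rightarrow> (nat \<Rightarrow> real) \<Rightarrow> bool" where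
  "tsm_feasible V E T x y z \<longleftrightarrow>
     (\<forall>v \<in> V. \<forall>t \<in> {0..T}. x v t \<in> {0, 1}) \<and>
     (\<forall>a \<in> arcs V E. \<forall>t \<in> {1..T}. y a t \<in> {0, 1}) \<and>
     (\<forall>t \<in> {1..T}. z t \<in> {0, 1}) \<and>
     \<comment> \<open>(1)\<close>
     (\<forall>v \<in> V. x v 0 + (\<Sum>t\<in>{1..T}. \<Sum>a\<in>in_arcs V E v. y a t) = 1) \<and>
     \<comment> \<open>(2)\<close>
     (\<forall>(u, v) \<in> arcs V E. \<forall>t \<in> {1..T}. y (u, v) t \<le> x u (t - 1)) \<and>
     \<comment> \<open>(3)\<close>
     (\<forall>(u, v) \<in> arcs V E. \<forall>w \<in> nbhd V E u - {v}. \<forall>t \<in> {1..T}. y (u, v) t \<le> x w (t - 1)) \<and>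
     \<comment> \<open>(4)\<close>
     (\<forall>v \<in> V. \<forall>t \<in> {1..T}. x v t = x v (t - 1) + (\<Sum>a\<in>in_arcs V E v. y a t)) \<and>
     \<comment> \<open>(5)\<close>
     (\<forall>(u, v) \<in> arcs V E. \<forall>t \<in> {1..T}.
        x u (t - 1) - x v (t - 1) + (\<Sum>w\<in>nbhd V E u - {v}. x w (t - 1))
          \<le> (\<Sum>a\<in>in_arcs V E v. y a t) + real (deg V E u) - 1) \<and>
     \<comment> \<open>(6)\<close>
     (\<forall>t \<in> {1..T}. (1 / real (card V)) * (\<Sum>v\<in>V. x v t - x v (t - 1)) - z t \<le> 0) \<and>
     \<comment> \<open>(7)\<close>
     (\<forall>t \<in> {1..T}. z t - (\<Sum>v\<in>V. x v t - x v (t - 1)) \<le> 0)"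

definition tsm_objective :: "'a set \<Rightarrow> nat \<Rightarrow> ('a \<Rightarrow> nat \<Rightarrow> real) \<Rightarrow> (nat \<Rightarrow> real) \<Rightarrow> real" where
  "tsm_objective V T x z = (\<Sum>v\<in>V. x v 0) + (\<Sum>t\<in>{1..T}. z t)"

definition tsm_optimal :: "'a set \<Rightarrow> ('a \<Rightarrow> 'a \<Rightarrow> bool) \<Rightarrow> nat \<Rightarrow>
    ('a \<Rightarrow> nat \<Rightarrow> real) \<Rightarrow> ('a \<times> 'a \<Rightarrow> nat \<Rightarrow> real) \<Rightarrow> (nat \<Rightarrow> real) \<Rightarrow> bool" where
  "tsm_optimal V E T x y z \<longleftrightarrow> tsm_feasible V E T x y z \<and>
     (\<forall>x' y' z'. tsm_feasible V E T x' y' z' \<longrightarrow>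
        tsm_objective V T x z \<le> tsm_objective V T x' z')"

end

theory Submission
  imports Defs
begin

(*
  The filled sets
  X_t = {v. x_v^t = 1} obey X_t = prop_step X_(t-1): constraints (2) and (3) make every
  newly filled vertex the target of a force, and (5) fills every vertex that can be forced.
  Constraints (6) and (7) make z^t the indicator of X_t ~= X_(t-1), and (1) and (4)
  telescope to X_T = V. So the objective of every feasible solution is |C| + pt(G,C) for
  its initial set C. Conversely, every C with finite propagation time, which is then at
  most n - 1, yields a feasible solution by recording one force per newly filled vertex.
  Hence an optimal solution minimises |C| + pt(G,C) over all C.
*)

lemma sum_of_bool_mem:
  assumes "finite A" "B \<subseteq> A"
  shows "(\<Sum>a\<in>A. of_bool (a \<in> B)) = (of_nat (card B) :: 'b :: semiring_1)"
  using assms by (simp add: Int_absorb1)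

lemma prop_step_increasing: "S \<subseteq> prop_step V E S"
  unfolding prop_step_def by auto

lemma prop_step_subset: "S \<subseteq> V \<Longrightarrow> prop_step V E S \<subseteq> V"
  unfolding prop_step_def nbhd_def by auto

lemma prop_step_full: "prop_step V E V = V"
  unfolding prop_step_def nbhd_def by auto

lemma prop_stepI: "u \<in> S \<Longrightarrow> nbhd V E u - S = {v} \<Longrightarrow> v \<in> prop_step V E S"
  unfolding prop_step_def by blast

lemma prop_stepE:
  assumes "v \<in> prop_step V E S"
  obtains "v \<in> S" | u where "v \<notin> S" "u \<in> S" "nbhd V E u - S = {v}"
  using assms unfolding prop_step_def by blast

lemma prop_step_iter_subset: "C \<subseteq> V \<Longrightarrow> (prop_step V E ^^ t) C \<subseteq> V"
  by (induction t) (auto dest: prop_step_subset[where E = E])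

lemma prop_step_iter_mono:
  assumes "s \<le> t"
  shows "(prop_step V E ^^ s) C \<subseteq> (prop_step V E ^^ t) C"
  using assms by (induction t rule: dec_induct) (auto intro: prop_step_increasing[THEN subsetD])

lemma prop_step_iter_full:
  assumes "(prop_step V E ^^ s) C = V" "s \<le> t"
  shows "(prop_step V E ^^ t) C = V"
  using assms(2) by (induction t rule: dec_induct) (simp_all add: assms(1) prop_step_full)

lemma prop_step_iter_stable:
  assumes "(prop_step V E ^^ Suc s) C = (prop_step V E ^^ s) C" "s \<le> t"
  shows "(prop_step V E ^^ t) C = (prop_step V E ^^ s) C"
  using assms(2) by (induction t rule: dec_induct) (use assms(1) in simp_all)

lemma prop_step_iter_subset_zf_closure: "(prop_step V E ^^ t) C \<subseteq> zf_closure V E C"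
proof (induction t)
  case 0
  then show ?case by (auto intro: zf_closure.init)
next
  case (Suc t)
  show ?case
  proof
    fix v assume "v \<in> (prop_step V E ^^ Suc t) C"
    then show "v \<in> zf_closure V E C"
      by (auto elim!: prop_stepE intro: zf_closure.force Suc[THEN subsetD])
  qed
qed

lemma prop_time_eq_enat_iff:
  "prop_time V E C = enat L \<longleftrightarrow>
     (prop_step V E ^^ L) C = V \<and> (\<forall>t<L. (prop_step V E ^^ t) C \<noteq> V)"
proof
  assume "prop_time V E C = enat L"
  then have reaches: "\<exists>t. (prop_step V E ^^ t) C = V"
    and L: "L = (LEAST t. (prop_step V E ^^ t) C = V)"
    unfolding prop_time_def by (auto split: if_splits)
  show "(prop_step V E ^^ L) C = V \<and> (\<forall>t<L. (prop_step V E ^^ t) C \<noteq> V)"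
    unfolding L using LeastI_ex[OF reaches] not_less_Least by blast
next
  assume "(prop_step V E ^^ L) C = V \<and> (\<forall>t<L. (prop_step V E ^^ t) C \<noteq> V)"
  then show "prop_time V E C = enat L"
    unfolding prop_time_def by (auto intro!: Least_equality leI)
qed

lemma prop_time_finite:
  assumes "(prop_step V E ^^ s) C = V"
  obtains L where "prop_time V E C = enat L" "L \<le> s"
proof
  show "prop_time V E C = enat (LEAST t. (prop_step V E ^^ t) C = V)"
    using assms unfolding prop_time_def by auto
  show "(LEAST t. (prop_step V E ^^ t) C = V) \<le> s"
    using assms by (rule Least_le)
qed

lemma prop_step_iter_grows:
  assumes "prop_time V E C = enat L" "t < L"
  shows "(prop_step V E ^^ t) C \<subset> (prop_step V E ^^ Suc t) C"
proof -
  have "(prop_step V E ^^ Suc t) C \<noteq> (prop_step V E ^^ t) C"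
  proof
    assume "(prop_step V E ^^ Suc t) C = (prop_step V E ^^ t) C"
    then have "(prop_step V E ^^ L) C = (prop_step V E ^^ t) C"
      by (rule prop_step_iter_stable) (use assms(2) in simp)
    then show False
      using assms unfolding prop_time_eq_enat_iff by auto
  qed
  then show ?thesis
    using prop_step_increasing[of "(prop_step V E ^^ t) C" V E] by auto
qed

lemma prop_step_iter_changes_eq:
  assumes "prop_time V E C = enat L" "L \<le> T"
  shows "{t \<in> {1..T}. (prop_step V E ^^ t) C \<noteq> (prop_step V E ^^ (t - 1)) C} = {1..L}"
proof -
  have "(prop_step V E ^^ t) C = V" if "L \<le> t" for t
    using assms(1) that prop_step_iter_full unfolding prop_time_eq_enat_iff by blast
  moreover have "(prop_step V E ^^ t) C \<noteq> (prop_step V E ^^ (t - 1)) C" if t: "t \<in> {1..L}" for t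
  proof -
    obtain s where "t = Suc s" "s < L"
      using t by (cases t) auto
    then show ?thesis
      using prop_step_iter_grows[OF assms(1), of s] by auto
  qed
  ultimately show ?thesis
    using assms(2) by fastforce
qed

lemma prop_time_le_card:
  assumes "finite V" "C \<subseteq> V" "prop_time V E C = enat L"
  shows "L \<le> card V - 1"
proof (cases "C = {}")
  case True
  then have "(prop_step V E ^^ t) C = {}" for t
    by (induction t) (auto simp: prop_step_def)
  then have "V = {}"
    using assms(3) unfolding prop_time_eq_enat_iff by metis
  then have "L = 0"
    using True assms(3) unfolding prop_time_eq_enat_iff by (metis funpow_0 gr0I)
  then show ?thesis by simp
next
  case False
  have "card C + t \<le> card ((prop_step V E ^^ t) C)" if "t \<le> L" for t
    using that
  proof (induction t)
    case (Suc t)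
    have "finite ((prop_step V E ^^ Suc t) C)"
      using assms(1,2) prop_step_iter_subset finite_subset by metis
    then have "card ((prop_step V E ^^ t) C) < card ((prop_step V E ^^ Suc t) C)"
      using prop_step_iter_grows[OF assms(3)] Suc.prems by (simp add: psubset_card_mono)
    then show ?case
      using Suc by simp
  qed simp
  from this[of L] have "card C + L \<le> card V"
    using assms(3) unfolding prop_time_eq_enat_iff by simp
  moreover have "card C > 0"
    using False assms(1,2) finite_subset card_gt_0_iff by blast
  ultimately show ?thesis by simp
qed

locale tsm_solution =
  fixes V :: "'a set" and E :: "'a \<Rightarrow> 'a \<Rightarrow> bool" and T :: nat
    and x :: "'a \<Rightarrow> nat \<Rightarrow> real" and y :: "'a \<times> 'a \<Rightarrow> nat \<Rightarrow> real" and z :: "nat \<Rightarrow> real"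
  assumes graph: "simple_graph V E"
    and feasible: "tsm_feasible V E T x y z"
begin

abbreviation filled :: "nat \<Rightarrow> 'a set" where
  "filled t \<equiv> {v \<in> V. x v t = 1}"

abbreviation inflow :: "'a \<Rightarrow> nat \<Rightarrow> real" where
  "inflow v t \<equiv> \<Sum>a\<in>in_arcs V E v. y a t"

lemma finite_V: "finite V"
  using graph unfolding simple_graph_def by blast

lemma x_binary: "v \<in> V \<Longrightarrow> t \<le> T \<Longrightarrow> x v t \<in> {0, 1}"
  using feasible unfolding tsm_feasible_def by auto

lemma y_binary: "a \<in> arcs V E \<Longrightarrow> t \<in> {1..T} \<Longrightarrow> y a t \<in> {0, 1}"
  using feasible unfolding tsm_feasible_def by auto

lemma z_binary: "t \<in> {1..T} \<Longrightarrow> z t \<in> {0, 1}"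
  using feasible unfolding tsm_feasible_def by auto

lemma filled_once: "v \<in> V \<Longrightarrow> x v 0 + (\<Sum>t\<in>{1..T}. inflow v t) = 1"
  using feasible unfolding tsm_feasible_def by auto

lemma y_le_x_tail: "(u, v) \<in> arcs V E \<Longrightarrow> t \<in> {1..T} \<Longrightarrow> y (u, v) t \<le> x u (t - 1)"
  using feasible unfolding tsm_feasible_def by fast

lemma y_le_x_other_nbhd:
  "(u, v) \<in> arcs V E \<Longrightarrow> w \<in> nbhd V E u - {v} \<Longrightarrow> t \<in> {1..T} \<Longrightarrow> y (u, v) t \<le> x w (t - 1)"
  using feasible unfolding tsm_feasible_def by fast

lemma x_step: "v \<in> V \<Longrightarrow> t \<in> {1..T} \<Longrightarrow> x v t = x v (t - 1) + inflow v t"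
  using feasible unfolding tsm_feasible_def by auto

lemma forcing_ineq:
  "(u, v) \<in> arcs V E \<Longrightarrow> t \<in> {1..T} \<Longrightarrow>
   x u (t - 1) - x v (t - 1) + (\<Sum>w\<in>nbhd V E u - {v}. x w (t - 1)) \<le> inflow v t + real (deg V E u) - 1"
  using feasible unfolding tsm_feasible_def by fast

lemma z_bounds:
  assumes "t \<in> {1..T}"
  shows "(1 / real (card V)) * (\<Sum>v\<in>V. x v t - x v (t - 1)) \<le> z t"
    and "z t \<le> (\<Sum>v\<in>V. x v t - x v (t - 1))"
  using feasible assms unfolding tsm_feasible_def by auto

lemma inflow_nonneg: "t \<in> {1..T} \<Longrightarrow> 0 \<le> inflow v t"
  by (rule sum_nonneg) (use y_binary in \<open>force simp: in_arcs_def\<close>)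

lemma x_increment:
  assumes "v \<in> V" "t \<in> {1..T}"
  shows "x v t - x v (t - 1) = of_bool (v \<in> filled t - filled (t - 1))"
proof -
  have "x v (t - 1) \<le> x v t"
    using x_step[OF assms] inflow_nonneg[OF assms(2), of v] by linarith
  then show ?thesis
    using x_binary[OF assms(1), of t] x_binary[OF assms(1), of "t - 1"] assms by auto
qed

lemma filled_subset_prop_step:
  assumes t: "t \<in> {1..T}"
  shows "filled t \<subseteq> prop_step V E (filled (t - 1))"
proof
  fix v assume v: "v \<in> filled t"
  show "v \<in> prop_step V E (filled (t - 1))"
  proof (cases "v \<in> filled (t - 1)")
    case True
    then show ?thesis by (rule prop_step_increasing[THEN subsetD])
  next
    case False
    then have "inflow v t \<noteq> 0"
      using x_step[OF _ t, of v] v by auto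
    then obtain a where a: "a \<in> in_arcs V E v" "y a t \<noteq> 0"
      using sum.not_neutral_contains_not_neutral by blast
    then obtain u where arc: "(u, v) \<in> arcs V E" and "a = (u, v)"
      unfolding in_arcs_def by (cases a) auto
    then have y1: "y (u, v) t = 1"
      using y_binary[OF arc t] a by auto
    have "x w (t - 1) = 1" if "w \<in> V" "x w (t - 1) \<ge> 1" for w
      using x_binary[OF that(1), of "t - 1"] that(2) t by auto
    then have "u \<in> filled (t - 1)" and "nbhd V E u - {v} \<subseteq> filled (t - 1)"
      using y_le_x_tail[OF arc t] y_le_x_other_nbhd[OF arc _ t] y1 arc
      by (auto simp: arcs_def nbhd_def)
    moreover have "v \<in> nbhd V E u"
      using arc by (auto simp: arcs_def nbhd_def)
    ultimately show ?thesis
      using False by (intro prop_stepI[of u]) auto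
  qed
qed

lemma prop_step_subset_filled:
  assumes t: "t \<in> {1..T}"
  shows "prop_step V E (filled (t - 1)) \<subseteq> filled t"
proof
  fix v assume "v \<in> prop_step V E (filled (t - 1))"
  then consider "v \<in> filled (t - 1)"
    | u where "v \<notin> filled (t - 1)" "u \<in> filled (t - 1)" "nbhd V E u - filled (t - 1) = {v}"
    by (rule prop_stepE)
  then show "v \<in> filled t"
  proof cases
    case 1
    then show ?thesis
      using x_increment[OF _ t, of v] by auto
  next
    case (2 u)
    then have v_nbhd: "v \<in> nbhd V E u" by blast
    then have arc: "(u, v) \<in> arcs V E" and "v \<in> V"
      using 2 by (auto simp: arcs_def nbhd_def)
    have "deg V E u = Suc (card (nbhd V E u - {v}))"
      unfolding deg_def using v_nbhd finite_V by (intro card.remove) (auto simp: nbhd_def)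
    moreover have "(\<Sum>w\<in>nbhd V E u - {v}. x w (t - 1)) = (\<Sum>w\<in>nbhd V E u - {v}. 1)"
      by (rule sum.cong[OF refl]) (use 2 in blast)
    moreover have x0: "x v (t - 1) = 0"
      using 2(1) \<open>v \<in> V\<close> x_binary[OF \<open>v \<in> V\<close>, of "t - 1"] t by auto
    ultimately have "1 \<le> inflow v t"
      using forcing_ineq[OF arc t] 2 by simp
    then have "x v t = 1"
      using x_step[OF \<open>v \<in> V\<close> t] x0 x_binary[OF \<open>v \<in> V\<close>, of t] t by auto
    then show ?thesis
      using \<open>v \<in> V\<close> by simp
  qed
qed

lemma filled_eq_prop_step_iter: "t \<le> T \<Longrightarrow> filled t = (prop_step V E ^^ t) (filled 0)"
proof (induction t)
  case (Suc t)
  then have t: "Suc t \<in> {1..T}" by simp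
  have "filled (Suc t) = prop_step V E (filled t)"
    using subset_antisym[OF filled_subset_prop_step[OF t] prop_step_subset_filled[OF t]] by simp
  then show ?case
    using Suc by simp
qed simp

lemma filled_final: "filled T = V"
proof -
  have "x v T = 1" if "v \<in> V" for v
  proof -
    have "x v T - x v 0 = (\<Sum>t\<in>{1..T}. x v t - x v (t - 1))"
      using sum_telescope''[of 0 T "x v"] by simp
    also have "\<dots> = (\<Sum>t\<in>{1..T}. inflow v t)"
      using x_step[OF that] by simp
    finally show ?thesis
      using filled_once[OF that] by simp
  qed
  then show ?thesis by auto
qed

lemma prop_step_iter_initial: "(prop_step V E ^^ T) (filled 0) = V"
  using filled_eq_prop_step_iter[of T] filled_final by simp

lemma initial_zero_forcing_set: "zero_forcing_set V E (filled 0)"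
  unfolding zero_forcing_set_def
  using prop_step_iter_subset_zf_closure[where t = T and C = "filled 0"] prop_step_iter_initial
  by auto

lemma z_eq_changed:
  assumes t: "t \<in> {1..T}"
  shows "z t = of_bool (filled t \<noteq> filled (t - 1))"
proof -
  have "(\<Sum>v\<in>V. x v t - x v (t - 1)) = (\<Sum>v\<in>V. of_bool (v \<in> filled t - filled (t - 1)))"
    using x_increment[OF _ t] by (rule sum.cong[OF refl])
  also have "\<dots> = real (card (filled t - filled (t - 1)))"
    by (rule sum_of_bool_mem[OF finite_V]) blast
  finally have increase: "(\<Sum>v\<in>V. x v t - x v (t - 1)) = real (card (filled t - filled (t - 1)))" .
  show ?thesis
  proof (cases "filled t = filled (t - 1)")
    case True
    then show ?thesis
      using z_bounds(2)[OF t] z_binary[OF t] increase by auto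
  next
    case False
    moreover have "filled (t - 1) \<subseteq> filled t"
      using x_increment[OF _ t] by force
    ultimately obtain v where "v \<in> filled t - filled (t - 1)"
      by blast
    then have "0 < card (filled t - filled (t - 1))" and "0 < card V"
      using finite_V by (auto simp: card_gt_0_iff)
    then have "0 < (1 / real (card V)) * real (card (filled t - filled (t - 1)))"
      by simp
    then have "0 < z t"
      using z_bounds(1)[OF t] unfolding increase by linarith
    then show ?thesis
      using z_binary[OF t] False by auto
  qed
qed

lemma throttle_set_initial_eq_objective:
  "\<exists>k. throttle_set V E (filled 0) = enat k \<and> real k = tsm_objective V T x z"
proof -
  obtain L where L: "prop_time V E (filled 0) = enat L" "L \<le> T"
    using prop_step_iter_initial by (rule prop_time_finite)
  have "(\<Sum>v\<in>V. x v 0) = (\<Sum>v\<in>V. of_bool (v \<in> filled 0))"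
    using x_binary by (intro sum.cong) auto
  also have "\<dots> = real (card (filled 0))"
    by (rule sum_of_bool_mem[OF finite_V]) blast
  finally have initial: "(\<Sum>v\<in>V. x v 0) = real (card (filled 0))" .
  have "(\<Sum>t\<in>{1..T}. z t) = real (card {t \<in> {1..T}. filled t \<noteq> filled (t - 1)})"
    using z_eq_changed by (simp add: Int_def)
  also have "{t \<in> {1..T}. filled t \<noteq> filled (t - 1)}
      = {t \<in> {1..T}. (prop_step V E ^^ t) (filled 0) \<noteq> (prop_step V E ^^ (t - 1)) (filled 0)}"
  proof (intro Collect_cong conj_cong refl)
    fix t assume "t \<in> {1..T}"
    then have "t \<le> T" "t - 1 \<le> T" by auto
    then show "(filled t \<noteq> filled (t - 1)) =
        ((prop_step V E ^^ t) (filled 0) \<noteq> (prop_step V E ^^ (t - 1)) (filled 0))"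
      by (simp only: filled_eq_prop_step_iter[OF \<open>t \<le> T\<close>] filled_eq_prop_step_iter[OF \<open>t - 1 \<le> T\<close>])
  qed
  also have "\<dots> = {1..L}"
    by (rule prop_step_iter_changes_eq[OF L])
  finally have "(\<Sum>t\<in>{1..T}. z t) = real L" by simp
  then show ?thesis
    using L initial by (simp add: throttle_set_def tsm_objective_def)
qed

end

locale forcing_process =
  fixes V :: "'a set" and E :: "'a \<Rightarrow> 'a \<Rightarrow> bool" and C :: "'a set" and T :: nat
  assumes graph: "simple_graph V E"
    and initial_subset: "C \<subseteq> V"
    and stage_final: "(prop_step V E ^^ T) C = V"
begin

abbreviation stage :: "nat \<Rightarrow> 'a set" where
  "stage t \<equiv> (prop_step V E ^^ t) C"

definition forcer :: "nat \<Rightarrow> 'a \<Rightarrow> 'a" where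
  "forcer t v = (SOME u. u \<in> stage (t - 1) \<and> nbhd V E u - stage (t - 1) = {v})"

definition stage_x :: "'a \<Rightarrow> nat \<Rightarrow> real" where
  "stage_x v t = of_bool (v \<in> stage t)"

definition stage_y :: "'a \<times> 'a \<Rightarrow> nat \<Rightarrow> real" where
  "stage_y a t = of_bool (snd a \<in> stage t - stage (t - 1) \<and> fst a = forcer t (snd a))"

definition stage_z :: "nat \<Rightarrow> real" where
  "stage_z t = of_bool (stage t \<noteq> stage (t - 1))"

lemma finite_V: "finite V"
  using graph unfolding simple_graph_def by blast

lemma stage_subset: "stage t \<subseteq> V"
  using initial_subset by (rule prop_step_iter_subset)

lemma stage_pred_subset: "stage (t - 1) \<subseteq> stage t"
  by (rule prop_step_iter_mono) simp

lemma stage_step: "1 \<le> t \<Longrightarrow> stage t = prop_step V E (stage (t - 1))"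
  by (cases t) simp_all

lemma forcer_forces:
  assumes "1 \<le> t" "v \<in> stage t - stage (t - 1)"
  shows "forcer t v \<in> stage (t - 1)" and "nbhd V E (forcer t v) - stage (t - 1) = {v}"
proof -
  have "\<exists>u. u \<in> stage (t - 1) \<and> nbhd V E u - stage (t - 1) = {v}"
    using assms(2) stage_step[OF assms(1)] by (auto elim: prop_stepE)
  then have "forcer t v \<in> stage (t - 1) \<and> nbhd V E (forcer t v) - stage (t - 1) = {v}"
    unfolding forcer_def by (rule someI_ex)
  then show "forcer t v \<in> stage (t - 1)" and "nbhd V E (forcer t v) - stage (t - 1) = {v}"
    by blast+
qed

lemma stage_x_increment: "stage_x v t - stage_x v (t - 1) = of_bool (v \<in> stage t - stage (t - 1))"
  using stage_pred_subset[of t] unfolding stage_x_def by auto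

lemma stage_inflow:
  assumes t: "1 \<le> t"
  shows "(\<Sum>a\<in>in_arcs V E v. stage_y a t) = of_bool (v \<in> stage t - stage (t - 1))"
proof (cases "v \<in> stage t - stage (t - 1)")
  case True
  then have "(forcer t v, v) \<in> in_arcs V E v"
    using forcer_forces[OF t True] stage_subset[of "t - 1"]
    by (auto simp: in_arcs_def arcs_def nbhd_def)
  moreover have "finite (in_arcs V E v)"
    by (rule finite_subset[of _ "V \<times> V"]) (auto simp: in_arcs_def arcs_def finite_V)
  moreover have "(\<Sum>a\<in>in_arcs V E v. stage_y a t)
      = (\<Sum>a\<in>in_arcs V E v. if a = (forcer t v, v) then 1 else 0)"
    using True by (intro sum.cong) (auto simp: stage_y_def in_arcs_def)
  ultimately show ?thesis
    using True by (simp add: sum.delta')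
next
  case False
  then have "\<forall>a\<in>in_arcs V E v. stage_y a t = 0"
    by (auto simp: stage_y_def in_arcs_def)
  with False show ?thesis
    by simp
qed

lemma stage_solution_filled_once:
  assumes "v \<in> V"
  shows "stage_x v 0 + (\<Sum>t\<in>{1..T}. \<Sum>a\<in>in_arcs V E v. stage_y a t) = 1"
proof -
  have "(\<Sum>t\<in>{1..T}. \<Sum>a\<in>in_arcs V E v. stage_y a t) = (\<Sum>t\<in>{1..T}. stage_x v t - stage_x v (t - 1))"
    using stage_inflow stage_x_increment by simp
  also have "\<dots> = stage_x v T - stage_x v 0"
    using sum_telescope''[of 0 T "stage_x v"] by simp
  finally show ?thesis
    using assms stage_final by (simp add: stage_x_def)
qed

lemma stage_solution_forcing_ineq:
  assumes arc: "(u, v) \<in> arcs V E" and t: "1 \<le> t"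
  shows "stage_x u (t - 1) - stage_x v (t - 1) + (\<Sum>w\<in>nbhd V E u - {v}. stage_x w (t - 1))
    \<le> (\<Sum>a\<in>in_arcs V E v. stage_y a t) + real (deg V E u) - 1"
proof -
  let ?S = "stage (t - 1)" and ?N = "nbhd V E u - {v}"
  have v_nbhd: "v \<in> nbhd V E u"
    using arc by (auto simp: arcs_def nbhd_def)
  have fin_nbhd: "finite (nbhd V E u)"
    using finite_V by (auto simp: nbhd_def)
  then have fin: "finite ?N"
    by blast
  have "deg V E u = Suc (card ?N)"
    unfolding deg_def using fin_nbhd v_nbhd by (rule card.remove)
  then have deg: "real (deg V E u) = real (card ?N) + 1"
    by simp
  have filled_nbrs: "(\<Sum>w\<in>?N. stage_x w (t - 1)) = real (card (?N \<inter> ?S))"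
    using fin by (simp add: stage_x_def Int_def)
  have "card (?N \<inter> ?S) \<le> card ?N"
    using fin by (intro card_mono) auto
  moreover have "card (?N \<inter> ?S) + 1 \<le> card ?N" if "\<not> ?N \<subseteq> ?S"
  proof -
    have "?N \<inter> ?S \<subset> ?N"
      using that by blast
    then have "card (?N \<inter> ?S) < card ?N"
      by (rule psubset_card_mono[OF fin])
    then show ?thesis
      by linarith
  qed
  moreover have "v \<in> stage t - ?S" if "u \<in> ?S" "v \<notin> ?S" "?N \<subseteq> ?S"
  proof -
    have "v \<in> prop_step V E ?S"
      using that v_nbhd by (intro prop_stepI[of u]) auto
    then show ?thesis
      using stage_step[OF t] that(2) by simp
  qed
  ultimately show ?thesis
    unfolding filled_nbrs deg stage_inflow[OF t]
    by (cases "?N \<subseteq> ?S"; cases "u \<in> ?S"; cases "v \<in> ?S") (auto simp: stage_x_def)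
qed

lemma stage_increase:
  "(\<Sum>v\<in>V. stage_x v t - stage_x v (t - 1)) = real (card (stage t - stage (t - 1)))"
  unfolding stage_x_increment using stage_subset[of t] by (intro sum_of_bool_mem finite_V) blast

lemma card_stage_increase_bounds:
  assumes "stage t \<noteq> stage (t - 1)"
  shows "1 \<le> card (stage t - stage (t - 1))" and "card (stage t - stage (t - 1)) \<le> card V"
proof -
  have "stage t - stage (t - 1) \<noteq> {}"
    using assms stage_pred_subset[of t] by blast
  moreover have "stage t - stage (t - 1) \<subseteq> V"
    using stage_subset[of t] by blast
  ultimately show "1 \<le> card (stage t - stage (t - 1))" "card (stage t - stage (t - 1)) \<le> card V"
    using finite_V by (auto simp: Suc_le_eq card_gt_0_iff intro: finite_subset card_mono)
qed

lemma stage_z_lower: "(1 / real (card V)) * (\<Sum>v\<in>V. stage_x v t - stage_x v (t - 1)) \<le> stage_z t"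
proof (cases "stage t = stage (t - 1)")
  case True
  then show ?thesis
    unfolding stage_increase stage_z_def by simp
next
  case False
  then have "real (card (stage t - stage (t - 1))) \<le> real (card V)" "0 < real (card V)"
    using card_stage_increase_bounds[OF False] by simp_all
  then show ?thesis
    unfolding stage_increase stage_z_def using False by simp
qed

lemma stage_z_upper: "stage_z t \<le> (\<Sum>v\<in>V. stage_x v t - stage_x v (t - 1))"
  unfolding stage_increase stage_z_def using card_stage_increase_bounds(1)[of t] by simp

lemma stage_solution_feasible: "tsm_feasible V E T stage_x stage_y stage_z"
proof -
  have "\<forall>v \<in> V. \<forall>t \<in> {0..T}. stage_x v t \<in> {0, 1}"
    and "\<forall>a \<in> arcs V E. \<forall>t \<in> {1..T}. stage_y a t \<in> {0, 1}"
    and "\<forall>t \<in> {1..T}. stage_z t \<in> {0, 1}"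
    by (simp_all add: stage_x_def stage_y_def stage_z_def)
  moreover have "\<forall>v \<in> V. stage_x v 0 + (\<Sum>t\<in>{1..T}. \<Sum>a\<in>in_arcs V E v. stage_y a t) = 1"
    using stage_solution_filled_once by blast
  moreover have "\<forall>(u, v) \<in> arcs V E. \<forall>t \<in> {1..T}. stage_y (u, v) t \<le> stage_x u (t - 1)"
    using forcer_forces(1) by (auto simp: stage_y_def stage_x_def)
  moreover have "\<forall>(u, v) \<in> arcs V E. \<forall>w \<in> nbhd V E u - {v}. \<forall>t \<in> {1..T}.
      stage_y (u, v) t \<le> stage_x w (t - 1)"
    using forcer_forces(2) by (fastforce simp: stage_y_def stage_x_def)
  moreover have "\<forall>v \<in> V. \<forall>t \<in> {1..T}.
      stage_x v t = stage_x v (t - 1) + (\<Sum>a\<in>in_arcs V E v. stage_y a t)"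
  proof (intro ballI)
    fix v t assume "t \<in> {1..T}"
    then have "1 \<le> t" by simp
    then show "stage_x v t = stage_x v (t - 1) + (\<Sum>a\<in>in_arcs V E v. stage_y a t)"
      using stage_x_increment[of v t] stage_inflow[of t v] by linarith
  qed
  moreover have "\<forall>(u, v) \<in> arcs V E. \<forall>t \<in> {1..T}.
      stage_x u (t - 1) - stage_x v (t - 1) + (\<Sum>w\<in>nbhd V E u - {v}. stage_x w (t - 1))
        \<le> (\<Sum>a\<in>in_arcs V E v. stage_y a t) + real (deg V E u) - 1"
    using stage_solution_forcing_ineq by auto
  moreover have "\<forall>t \<in> {1..T}. (1 / real (card V)) * (\<Sum>v\<in>V. stage_x v t - stage_x v (t - 1)) - stage_z t \<le> 0"
    using stage_z_lower by (simp add: diff_le_0_iff_le)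
  moreover have "\<forall>t \<in> {1..T}. stage_z t - (\<Sum>v\<in>V. stage_x v t - stage_x v (t - 1)) \<le> 0"
    using stage_z_upper by (simp add: diff_le_0_iff_le)
  ultimately show ?thesis
    unfolding tsm_feasible_def by (intro conjI)
qed

lemma stage_solution_initial: "{v \<in> V. stage_x v 0 = 1} = C"
  using initial_subset by (auto simp: stage_x_def)

end

lemma tsm_solution_from_throttle_set:
  assumes graph: "simple_graph V E" and "C \<subseteq> V" and throttle: "throttle_set V E C = enat k"
  obtains x y z where "tsm_feasible V E (card V - 1) x y z" "tsm_objective V (card V - 1) x z = real k"
proof -
  obtain L where L: "prop_time V E C = enat L"
    using throttle unfolding throttle_set_def by (cases "prop_time V E C") auto
  have "finite V"
    using graph unfolding simple_graph_def by blast
  then have "L \<le> card V - 1"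
    using prop_time_le_card \<open>C \<subseteq> V\<close> L by blast
  then have "(prop_step V E ^^ (card V - 1)) C = V"
    using L prop_step_iter_full unfolding prop_time_eq_enat_iff by blast
  then interpret forcing_process V E C "card V - 1"
    using graph \<open>C \<subseteq> V\<close> by unfold_locales
  interpret tsm_solution V E "card V - 1" stage_x stage_y stage_z
    using graph stage_solution_feasible by unfold_locales
  show thesis
    using that stage_solution_feasible throttle_set_initial_eq_objective throttle
    unfolding stage_solution_initial by auto
qed

theorem corollary4p7:
  fixes V :: "'a set" and E :: "'a \<Rightarrow> 'a \<Rightarrow> bool"
    and x :: "'a \<Rightarrow> nat \<Rightarrow> real" and y :: "'a \<times> 'a \<Rightarrow> nat \<Rightarrow> real" and z :: "nat \<Rightarrow> real"
  assumes "simple_graph V E"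
    and "tsm_optimal V E (card V - 1) x y z"
  shows "zero_forcing_set V E {v \<in> V. x v 0 = 1}
    \<and> throttle V E = throttle_set V E {v \<in> V. x v 0 = 1}
    \<and> (\<exists>k::nat. throttle_set V E {v \<in> V. x v 0 = 1} = enat k
               \<and> real k = tsm_objective V (card V - 1) x z)"
proof -
  let ?T = "card V - 1" and ?C = "{v \<in> V. x v 0 = 1}"
  have feasible: "tsm_feasible V E ?T x y z"
    and optimal: "\<And>x' y' z'. tsm_feasible V E ?T x' y' z' \<Longrightarrow>
      tsm_objective V ?T x z \<le> tsm_objective V ?T x' z'"
    using assms(2) unfolding tsm_optimal_def by blast+
  interpret tsm_solution V E ?T x y z
    using assms(1) feasible by unfold_locales
  obtain k where k: "throttle_set V E ?C = enat k" "real k = tsm_objective V ?T x z"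
    using throttle_set_initial_eq_objective by blast
  have "throttle_set V E ?C \<le> throttle_set V E C'" if C': "C' \<subseteq> V" for C'
  proof (cases "throttle_set V E C'")
    case (enat k')
    obtain x' y' z' where "tsm_feasible V E ?T x' y' z'" "tsm_objective V ?T x' z' = real k'"
      by (rule tsm_solution_from_throttle_set[OF assms(1) C' enat])
    then show ?thesis
      using optimal k enat by fastforce
  qed simp
  then have "throttle V E = throttle_set V E ?C"
    unfolding throttle_def by (intro antisym INF_lower INF_greatest) auto
  then show ?thesis
    using initial_zero_forcing_set k by blast
qed

end
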